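(* Let $\mathcal T$ be the set of all finite strings of $0$'s and $1$'s (of length $\ge 1$), and for $\sigma=(\sigma_1,\dots,\sigma_{\ell(\sigma)})\in\mathcal T$ let $I(\sigma)=\left(\sum_{i=1}^{\ell(\sigma)}\sigma_i2^{-i},\;2^{-\ell(\sigma)}+\sum_{i=1}^{\ell(\sigma)}\sigma_i2^{-i}\right]$ and $d_\sigma=\mathbf 1_{I(\sigma)}$. Let $\Psi:\mathcal T\to\mathbb Z\setminus\{0\}$ be injective, let $d=\mathbf 1_{(0,1]}$, and for $\sigma\in\mathcal T$ let $f_\sigma=d_\sigma+\ell(\sigma)\cdot\mathbf 1_{(\Psi(\sigma),\Psi(\sigma)+1]}$. Then the subset $M=\{0,d\}\cup\{f_\sigma:\sigma\in\mathcal T\}$ of $L_1(-\infty,\infty)$, with the $L_1$ metric, is locally finite and admits no isometric embedding into $\ell_1$.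
   Context: $\ell(\sigma)$ denotes the length of the string $\sigma$, and $\mathbf 1_I$ the indicator function of a set $I\subset\mathbb R$. A metric space is locally finite if every ball of finite radius in it has finite cardinality. *)

theory Defs
  imports "HOL-Analysis.Analysis"
begin

text \<open>Binary strings of length at least 1, as boolean lists (True = 1, False = 0).\<close>
definition strings :: "bool list set" where
  "strings = {\<sigma>. length \<sigma> \<ge> 1}"

text \<open>Left endpoint: sum over i = 1..l of sigma_i 2^(-i) (0-indexed list access).\<close>
definition lend :: "bool list \<Rightarrow> real" where
  "lend \<sigma> = (\<Sum>i<length \<sigma>. of_bool (\<sigma> ! i) * (1/2) ^ (Suc i))"

definition Iv :: "bool list \<Rightarrow> real set" where
  "Iv \<sigma> = {lend \<sigma> <.. (1/2) ^ length \<sigma> + lend \<sigma>}"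

definition dfun :: "real \<Rightarrow> real" where
  "dfun = indicator {0<..1}"

definition fsig :: "(bool list \<Rightarrow> int) \<Rightarrow> bool list \<Rightarrow> real \<Rightarrow> real" where
  "fsig \<Psi> \<sigma> = (\<lambda>x. indicator (Iv \<sigma>) x
      + real (length \<sigma>) * indicator {real_of_int (\<Psi> \<sigma>) <.. real_of_int (\<Psi> \<sigma>) + 1} x)"

definition Mset :: "(bool list \<Rightarrow> int) \<Rightarrow> (real \<Rightarrow> real) set" where
  "Mset \<Psi> = {(\<lambda>x. 0), dfun} \<union> {fsig \<Psi> \<sigma> | \<sigma>. \<sigma> \<in> strings}"

definition L1dist :: "(real \<Rightarrow> real) \<Rightarrow> (real \<Rightarrow> real) \<Rightarrow> real" where
  "L1dist f g = (LINT x|lborel. \<bar>f x - g x\<bar>)"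

definition locally_finite_L1 :: "(real \<Rightarrow> real) set \<Rightarrow> bool" where
  "locally_finite_L1 M \<longleftrightarrow> (\<forall>m\<in>M. \<forall>r::real. finite {m'\<in>M. L1dist m m' \<le> r})"

definition embeds_isometrically_l1 :: "(real \<Rightarrow> real) set \<Rightarrow> bool" where
  "embeds_isometrically_l1 M \<longleftrightarrow> (\<exists>F :: (real \<Rightarrow> real) \<Rightarrow> nat \<Rightarrow> real.
      (\<forall>m\<in>M. summable (\<lambda>n. \<bar>F m n\<bar>)) \<and>
      (\<forall>m\<in>M. \<forall>m'\<in>M. (\<Sum>n. \<bar>F m n - F m' n\<bar>) = L1dist m m'))"

end

theory Submission
  imports Defs
begin

text \<open>
  Local finiteness: \<open>f\<^sub>\<sigma>\<close> is at distance \<open>\<ell>(\<sigma>) + 2\<^sup>-\<^sup>\<ell>\<^sup>(\<^sup>\<sigma>\<^sup>)\<close> from \<open>0\<close>, so a ball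
  contains only finitely many \<open>f\<^sub>\<sigma>\<close>.

  No embedding: place \<open>0\<close> at the origin of \<open>\<ell>\<^sub>1\<close> and let \<open>u\<close>, \<open>y\<^sub>\<sigma>\<close> be the images of \<open>d\<close>,
  \<open>f\<^sub>\<sigma>\<close>. The overlap \<open>|a\<^sub>n| + |b\<^sub>n| - |a\<^sub>n - b\<^sub>n|\<close> of two sequences is nonnegative, at most
  \<open>2|b\<^sub>n|\<close>, vanishes unless \<open>a\<^sub>n b\<^sub>n > 0\<close>, and sums to \<open>\<parallel>a\<parallel> + \<parallel>b\<parallel> - \<parallel>a - b\<parallel>\<close>. For \<open>\<sigma>\<close> of
  length \<open>\<ell>\<close> the distances give the overlap of \<open>y\<^sub>\<sigma>\<close> with \<open>u\<close> mass \<open>2\<^sup>1\<^sup>-\<^sup>\<ell>\<close>, and for distinct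
  \<open>\<sigma>, \<tau>\<close> of length \<open>\<ell>\<close> (so \<open>I(\<sigma>) \<inter> I(\<tau>) = \<emptyset>\<close>) the overlap of \<open>y\<^sub>\<sigma>\<close> and \<open>y\<^sub>\<tau>\<close> vanishes;
  hence the overlaps of the \<open>2\<^sup>\<ell>\<close> vectors \<open>y\<^sub>\<sigma>\<close> with \<open>u\<close> have disjoint supports. Their total
  mass \<open>2 = 2\<parallel>u\<parallel>\<close> forces them to add up to exactly \<open>2|u|\<close>, so \<open>|u\<^sub>n| \<le> 2\<^sup>-\<^sup>\<ell>\<close>. As \<open>\<ell>\<close> is
  arbitrary, \<open>u = 0\<close>, contradicting \<open>\<parallel>u\<parallel> = 1\<close>.
\<close>

lemma lend_Nil [simp]: "lend [] = 0"
  by (simp add: lend_def)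

lemma lend_Cons: "lend (b # \<sigma>) = of_bool b / 2 + lend \<sigma> / 2"
proof -
  have "lend (b # \<sigma>) = (\<Sum>i<Suc (length \<sigma>). of_bool ((b # \<sigma>) ! i) * (1/2) ^ Suc i)"
    by (simp add: lend_def)
  also have "\<dots> = of_bool b / 2 + (\<Sum>i<length \<sigma>. of_bool (\<sigma> ! i) * (1/2) ^ Suc (Suc i))"
    by (subst sum.lessThan_Suc_shift) simp
  also have "(\<Sum>i<length \<sigma>. of_bool (\<sigma> ! i) * (1/2::real) ^ Suc (Suc i)) = lend \<sigma> / 2"
    by (simp add: lend_def sum_divide_distrib mult_ac)
  finally show ?thesis .
qed

lemma lend_bounds: "0 \<le> lend \<sigma> \<and> lend \<sigma> + (1/2) ^ length \<sigma> \<le> 1"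
  by (induction \<sigma>) (auto simp: lend_Cons)

lemma lend_dist_ge:
  assumes "length \<sigma> = length \<tau>" "\<sigma> \<noteq> \<tau>"
  shows "(1/2) ^ length \<sigma> \<le> \<bar>lend \<sigma> - lend \<tau>\<bar>"
  using assms
proof (induction \<sigma> arbitrary: \<tau>)
  case Nil
  then show ?case by simp
next
  case (Cons b \<sigma>)
  then obtain c \<tau>' where \<tau>: "\<tau> = c # \<tau>'" "length \<tau>' = length \<sigma>"
    by (cases \<tau>) auto
  show ?case
  proof (cases "b = c")
    case True
    then have "(1/2) ^ length \<sigma> \<le> \<bar>lend \<sigma> - lend \<tau>'\<bar>"
      using Cons.IH[of \<tau>'] Cons.prems \<tau> by auto
    then show ?thesis
      using True \<tau> by (simp add: lend_Cons abs_if field_simps split: if_splits)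
  next
    case False
    then show ?thesis
      using \<tau> lend_bounds[of \<sigma>] lend_bounds[of \<tau>']
      by (cases b; cases c) (auto simp: lend_Cons abs_if)
  qed
qed

lemma Iv_subset_unit: "Iv \<sigma> \<subseteq> {0<..1}"
  using lend_bounds[of \<sigma>] by (auto simp: Iv_def)

lemma Iv_disjoint: "length \<sigma> = length \<tau> \<Longrightarrow> \<sigma> \<noteq> \<tau> \<Longrightarrow> Iv \<sigma> \<inter> Iv \<tau> = {}"
  using lend_dist_ge[of \<sigma> \<tau>] by (auto simp: Iv_def abs_if split: if_splits)

lemma unit_intervals_disjoint:
  "(k::int) \<noteq> k' \<Longrightarrow> {of_int k<..of_int k + 1} \<inter> {of_int k'<..of_int k' + 1} = ({} :: real set)"
  by auto

lemma integrable_indicator_Ioc: "integrable lborel (indicator {a<..b} :: real \<Rightarrow> real)"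
  by (cases "a \<le> b") (auto intro!: integrable_real_indicator simp: emeasure_lborel_Ioc)

lemma integrable_fsig: "integrable lborel (fsig \<Psi> \<sigma>)"
  unfolding fsig_def Iv_def
  by (intro Bochner_Integration.integrable_add integrable_mult_right integrable_indicator_Ioc)

lemma integral_indicator_Iv: "(LINT x|lborel. indicator (Iv \<sigma>) x) = ((1/2) ^ length \<sigma> :: real)"
  by (simp add: integral_indicator Iv_def)

lemma integral_fsig: "(LINT x|lborel. fsig \<Psi> \<sigma> x) = (1/2) ^ length \<sigma> + real (length \<sigma>)"
  unfolding fsig_def Iv_def
  by (simp add: Bochner_Integration.integral_add integral_indicator integrable_indicator_Ioc)

lemma integral_dfun: "(LINT x|lborel. dfun x) = 1"
  by (simp add: dfun_def)

lemma integrable_Mset: "m \<in> Mset \<Psi> \<Longrightarrow> integrable lborel m"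
  by (auto simp: Mset_def dfun_def integrable_fsig integrable_indicator_Ioc)

lemma L1dist_commute: "L1dist f g = L1dist g f"
  by (simp add: L1dist_def abs_minus_commute)

lemma L1dist_triangle:
  assumes "integrable lborel f" "integrable lborel g" "integrable lborel h"
  shows "L1dist f h \<le> L1dist f g + L1dist g h"
proof -
  have "L1dist f h \<le> (LINT x|lborel. \<bar>f x - g x\<bar> + \<bar>g x - h x\<bar>)"
    unfolding L1dist_def by (rule integral_mono) (use assms in auto)
  also have "\<dots> = L1dist f g + L1dist g h"
    unfolding L1dist_def by (rule Bochner_Integration.integral_add) (use assms in auto)
  finally show ?thesis .
qed

lemma fsig_nonneg: "0 \<le> fsig \<Psi> \<sigma> x"
  by (simp add: fsig_def)

lemma L1dist_zero_fsig: "L1dist (\<lambda>x. 0) (fsig \<Psi> \<sigma>) = real (length \<sigma>) + (1/2) ^ length \<sigma>"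
  using integral_fsig[of \<Psi> \<sigma>] by (simp add: L1dist_def fsig_nonneg)

lemma L1dist_zero_dfun: "L1dist (\<lambda>x. 0) dfun = 1"
  using integral_dfun by (simp add: L1dist_def dfun_def)

text \<open>Since \<open>I(\<sigma>) \<subseteq> (0,1]\<close> and \<open>\<Psi>(\<sigma>) \<noteq> 0\<close>, the functions \<open>d\<close> and \<open>f\<^sub>\<sigma> - \<one>\<^bsub>I(\<sigma>)\<^esub>\<close>
  have disjoint supports.\<close>

lemma L1dist_dfun_fsig:
  assumes "\<Psi> \<sigma> \<noteq> 0"
  shows "L1dist dfun (fsig \<Psi> \<sigma>) = 1 - (1/2) ^ length \<sigma> + real (length \<sigma>)"
proof -
  have "\<bar>dfun x - fsig \<Psi> \<sigma> x\<bar> = dfun x + fsig \<Psi> \<sigma> x - 2 * indicator (Iv \<sigma>) x" for x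
    using Iv_subset_unit[of \<sigma>] unit_intervals_disjoint[OF assms]
    by (auto simp: dfun_def fsig_def indicator_def)
  then have "L1dist dfun (fsig \<Psi> \<sigma>)
      = (LINT x|lborel. dfun x + fsig \<Psi> \<sigma> x - 2 * indicator (Iv \<sigma>) x)"
    by (simp add: L1dist_def)
  also have "\<dots> = 1 + ((1/2) ^ length \<sigma> + real (length \<sigma>)) - 2 * (1/2) ^ length \<sigma>"
    using integrable_Mset[of dfun \<Psi>] integrable_fsig[of \<Psi> \<sigma>]
    by (simp add: Bochner_Integration.integral_diff Bochner_Integration.integral_add
        integral_dfun integral_fsig integral_indicator_Iv Iv_def integrable_indicator_Ioc Mset_def)
  finally show ?thesis by simp
qed

lemma L1dist_fsig_fsig:
  assumes "\<Psi> \<sigma> \<noteq> \<Psi> \<tau>" "\<Psi> \<sigma> \<noteq> 0" "\<Psi> \<tau> \<noteq> 0" "Iv \<sigma> \<inter> Iv \<tau> = {}"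
  shows "L1dist (fsig \<Psi> \<sigma>) (fsig \<Psi> \<tau>)
    = (real (length \<sigma>) + (1/2) ^ length \<sigma>) + (real (length \<tau>) + (1/2) ^ length \<tau>)"
proof -
  have "\<bar>fsig \<Psi> \<sigma> x - fsig \<Psi> \<tau> x\<bar> = fsig \<Psi> \<sigma> x + fsig \<Psi> \<tau> x" for x
    using assms(4) unit_intervals_disjoint[OF assms(1)]
      unit_intervals_disjoint[OF assms(2)] unit_intervals_disjoint[OF assms(3)]
      Iv_subset_unit[of \<sigma>] Iv_subset_unit[of \<tau>]
    by (auto simp: fsig_def indicator_def)
  then show ?thesis
    using integral_fsig[of \<Psi>] by (simp add: L1dist_def Bochner_Integration.integral_add integrable_fsig)
qed

lemma length_le_of_L1dist:
  assumes "m \<in> Mset \<Psi>" "\<sigma> \<in> strings" "L1dist m (fsig \<Psi> \<sigma>) \<le> r"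
  shows "real (length \<sigma>) \<le> r + L1dist (\<lambda>x. 0) m"
proof -
  have "L1dist (\<lambda>x. 0) (fsig \<Psi> \<sigma>) \<le> L1dist (\<lambda>x. 0) m + L1dist m (fsig \<Psi> \<sigma>)"
    by (rule L1dist_triangle) (auto intro: integrable_Mset assms integrable_fsig)
  then show ?thesis
    using assms(3) L1dist_zero_fsig[of \<Psi> \<sigma>] zero_le_power[of "1/2::real" "length \<sigma>"] by linarith
qed

lemma locally_finite_Mset: "locally_finite_L1 (Mset \<Psi>)"
  unfolding locally_finite_L1_def
proof (intro ballI allI)
  fix m r
  assume m: "m \<in> Mset \<Psi>"
  define K where "K = nat \<lceil>r + L1dist (\<lambda>x. 0) m\<rceil>"
  have "{m' \<in> Mset \<Psi>. L1dist m m' \<le> r} \<subseteq> {(\<lambda>x. 0), dfun} \<union> fsig \<Psi> ` {\<sigma>. length \<sigma> \<le> K}"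
  proof
    fix m'
    assume "m' \<in> {m' \<in> Mset \<Psi>. L1dist m m' \<le> r}"
    moreover have "length \<sigma> \<le> K" if "\<sigma> \<in> strings" "L1dist m (fsig \<Psi> \<sigma>) \<le> r" for \<sigma>
      using length_le_of_L1dist[OF m that] unfolding K_def by linarith
    ultimately show "m' \<in> {(\<lambda>x. 0), dfun} \<union> fsig \<Psi> ` {\<sigma>. length \<sigma> \<le> K}"
      by (auto simp: Mset_def)
  qed
  moreover have "finite {\<sigma> :: bool list. length \<sigma> \<le> K}"
    using finite_lists_length_le[of "UNIV :: bool set" K] by simp
  ultimately show "finite {m' \<in> Mset \<Psi>. L1dist m m' \<le> r}"
    by (meson finite.emptyI finite.insertI finite_UnI finite_imageI finite_subset)
qed

text \<open>Coordinatewise, \<open>overlap a b n\<close> is \<open>2 min(|a n|, |b n|)\<close> if \<open>a n\<close> and \<open>b n\<close> have the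
  same strict sign and \<open>0\<close> otherwise.\<close>

definition overlap :: "(nat \<Rightarrow> real) \<Rightarrow> (nat \<Rightarrow> real) \<Rightarrow> nat \<Rightarrow> real" where
  "overlap a b n = \<bar>a n\<bar> + \<bar>b n\<bar> - \<bar>a n - b n\<bar>"

lemma overlap_nonneg: "0 \<le> overlap a b n"
  unfolding overlap_def by linarith

lemma overlap_le_abs: "overlap a b n \<le> 2 * \<bar>b n\<bar>"
  unfolding overlap_def by linarith

lemma overlap_eq_0_iff: "overlap a b n = 0 \<longleftrightarrow> a n * b n \<le> 0"
  unfolding overlap_def by (auto simp: abs_if mult_le_0_iff)

lemma overlap_mult_eq_0:
  assumes "overlap a b n = 0"
  shows "overlap a u n * overlap b u n = 0"
proof (rule ccontr)
  assume "overlap a u n * overlap b u n \<noteq> 0"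
  then have "0 < (a n * u n) * (b n * u n)"
    by (simp add: overlap_eq_0_iff)
  then have "0 < (a n * b n) * (u n)\<^sup>2"
    by (simp add: power2_eq_square mult_ac)
  then have "0 < a n * b n"
    by (metis zero_less_mult_iff zero_le_power2 not_less)
  then show False
    using assms by (simp add: overlap_eq_0_iff)
qed

lemma summable_abs_diff:
  fixes a b :: "nat \<Rightarrow> real"
  assumes "summable (\<lambda>n. \<bar>a n\<bar>)" "summable (\<lambda>n. \<bar>b n\<bar>)"
  shows "summable (\<lambda>n. \<bar>a n - b n\<bar>)"
  by (rule summable_comparison_test[of _ "\<lambda>n. \<bar>a n\<bar> + \<bar>b n\<bar>"])
    (auto intro: summable_add assms)

lemma
  assumes "summable (\<lambda>n. \<bar>a n\<bar>)" "summable (\<lambda>n. \<bar>b n\<bar>)"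
  shows summable_overlap: "summable (overlap a b)"
    and suminf_overlap: "(\<Sum>n. overlap a b n) = (\<Sum>n. \<bar>a n\<bar>) + (\<Sum>n. \<bar>b n\<bar>) - (\<Sum>n. \<bar>a n - b n\<bar>)"
proof -
  have sab: "summable (\<lambda>n. \<bar>a n\<bar> + \<bar>b n\<bar>)"
    using assms by (rule summable_add)
  note sd = summable_abs_diff[OF assms]
  show "summable (overlap a b)"
    unfolding overlap_def[abs_def] using sab sd by (rule summable_diff)
  show "(\<Sum>n. overlap a b n) = (\<Sum>n. \<bar>a n\<bar>) + (\<Sum>n. \<bar>b n\<bar>) - (\<Sum>n. \<bar>a n - b n\<bar>)"
    unfolding overlap_def using suminf_diff[OF sab sd] suminf_add[OF assms] by simp
qed

lemma overlap_le_suminf: "summable (overlap a b) \<Longrightarrow> overlap a b n \<le> (\<Sum>n. overlap a b n)"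
  using sum_le_suminf[of "overlap a b" "{n}"] by (simp add: overlap_nonneg)

lemma overlap_eq_0_of_suminf: "summable (overlap a b) \<Longrightarrow> (\<Sum>n. overlap a b n) = 0 \<Longrightarrow> overlap a b n = 0"
  using suminf_eq_zero_iff[of "overlap a b"] by (simp add: overlap_nonneg)

lemma sum_le_of_pairwise_mult_eq_0:
  fixes g :: "'a \<Rightarrow> real"
  assumes "finite S" "0 \<le> B" "\<And>s. s \<in> S \<Longrightarrow> 0 \<le> g s \<and> g s \<le> B"
    and "\<And>s t. s \<in> S \<Longrightarrow> t \<in> S \<Longrightarrow> s \<noteq> t \<Longrightarrow> g s * g t = 0"
  shows "sum g S \<le> B"
proof (cases "\<forall>s\<in>S. g s = 0")
  case True
  then show ?thesis using assms(2) by simp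
next
  case False
  then obtain s where s: "s \<in> S" "g s \<noteq> 0" by auto
  have "sum g S = g s + sum g (S - {s})"
    using assms(1) s(1) by (rule sum.remove)
  also have "sum g (S - {s}) = 0"
    using assms(4)[OF s(1)] s by (intro sum.neutral) auto
  finally show ?thesis using assms(3)[OF s(1)] by simp
qed

lemma abs_le_of_orthogonal_overlaps:
  fixes u :: "nat \<Rightarrow> real" and y :: "'a \<Rightarrow> nat \<Rightarrow> real" and c :: real
  assumes "finite S" "S \<noteq> {}"
    and su: "summable (\<lambda>n. \<bar>u n\<bar>)" and sy: "\<And>s. s \<in> S \<Longrightarrow> summable (\<lambda>n. \<bar>y s n\<bar>)"
    and orth: "\<And>s t. s \<in> S \<Longrightarrow> t \<in> S \<Longrightarrow> s \<noteq> t \<Longrightarrow> (\<Sum>n. overlap (y s) (y t) n) = 0"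
    and mass: "\<And>s. s \<in> S \<Longrightarrow> (\<Sum>n. overlap (y s) u n) = 2 * c"
    and total: "real (card S) * c = (\<Sum>n. \<bar>u n\<bar>)"
  shows "\<bar>u n\<bar> \<le> c"
proof -
  define Q where "Q n = (\<Sum>s\<in>S. overlap (y s) u n)" for n
  have sq: "summable (overlap (y s) u)" if "s \<in> S" for s
    using summable_overlap[OF sy[OF that] su] .
  have disj: "overlap (y s) u n * overlap (y t) u n = 0" if "s \<in> S" "t \<in> S" "s \<noteq> t" for s t n
  proof (rule overlap_mult_eq_0)
    show "overlap (y s) (y t) n = 0"
      using summable_overlap[OF sy[OF that(1)] sy[OF that(2)]] orth[OF that]
      by (rule overlap_eq_0_of_suminf)
  qed
  have overlap_le_c: "overlap (y s) u n \<le> 2 * c" if "s \<in> S" for s n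
    using overlap_le_suminf[OF sq[OF that]] mass[OF that] by simp
  have "0 \<le> 2 * c"
    using \<open>S \<noteq> {}\<close> overlap_nonneg overlap_le_c order_trans by blast
  then have Q_le_c: "Q n \<le> 2 * c" for n
    unfolding Q_def using \<open>finite S\<close> disj
    by (intro sum_le_of_pairwise_mult_eq_0) (auto simp: overlap_nonneg overlap_le_c)
  have Q_le_u: "Q n \<le> 2 * \<bar>u n\<bar>" for n
    unfolding Q_def using \<open>finite S\<close> disj
    by (intro sum_le_of_pairwise_mult_eq_0) (auto simp: overlap_nonneg overlap_le_abs)
  have sQ: "summable Q"
    unfolding Q_def[abs_def] using sq by (intro summable_sum) auto
  have s2u: "summable (\<lambda>n. 2 * \<bar>u n\<bar>)"
    using su by (rule summable_mult)
  have "(\<Sum>n. 2 * \<bar>u n\<bar> - Q n) = 2 * (\<Sum>n. \<bar>u n\<bar>) - (\<Sum>s\<in>S. \<Sum>n. overlap (y s) u n)"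
  proof -
    have "(\<Sum>n. Q n) = (\<Sum>s\<in>S. \<Sum>n. overlap (y s) u n)"
      unfolding Q_def by (rule suminf_sum) (rule sq)
    then show ?thesis
      using suminf_diff[OF s2u sQ] suminf_mult[OF su, of 2] by simp
  qed
  also have "\<dots> = 0"
    using mass total by simp
  finally have "2 * \<bar>u n\<bar> - Q n = 0"
    using suminf_eq_zero_iff[of "\<lambda>n. 2 * \<bar>u n\<bar> - Q n"] summable_diff[OF s2u sQ] Q_le_u by simp
  then show ?thesis
    using Q_le_c[of n] by simp
qed

lemma eq_0_of_abs_le_half_powers:
  fixes x :: real
  assumes "\<And>k. \<bar>x\<bar> \<le> (1/2) ^ Suc k"
  shows "x = 0"
proof (rule ccontr)
  assume "x \<noteq> 0"
  then obtain k where "(1/2::real) ^ k < \<bar>x\<bar>"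
    using real_arch_pow_inv[of "\<bar>x\<bar>" "1/2"] by auto
  then show False
    using assms[of k] by simp
qed

lemma
  shows finite_lists_bool_length_eq: "finite {\<sigma> :: bool list. length \<sigma> = l}"
    and card_lists_bool_length_eq: "card {\<sigma> :: bool list. length \<sigma> = l} = 2 ^ l"
  using finite_lists_length_eq[of "UNIV :: bool set" l] card_lists_length_eq[of "UNIV :: bool set" l]
  by (simp_all add: card_UNIV_bool)

lemma summable_abs_embedding_diff:
  fixes F :: "'a \<Rightarrow> nat \<Rightarrow> real"
  assumes "\<forall>m\<in>M. summable (\<lambda>n. \<bar>F m n\<bar>)" "z \<in> M" "a \<in> M"
  shows "summable (\<lambda>n. \<bar>F a n - F z n\<bar>)"
  using assms by (intro summable_abs_diff) auto

lemma suminf_overlap_embedding: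
  fixes F :: "'a \<Rightarrow> nat \<Rightarrow> real"
  assumes Fs: "\<forall>m\<in>M. summable (\<lambda>n. \<bar>F m n\<bar>)"
    and Fd: "\<forall>m\<in>M. \<forall>m'\<in>M. (\<Sum>n. \<bar>F m n - F m' n\<bar>) = \<delta> m m'"
    and "z \<in> M" "a \<in> M" "b \<in> M"
  shows "(\<Sum>n. overlap (\<lambda>n. F a n - F z n) (\<lambda>n. F b n - F z n) n) = \<delta> z a + \<delta> z b - \<delta> a b"
proof -
  have "(\<Sum>n. \<bar>F m n - F z n\<bar>) = \<delta> z m" if "m \<in> M" for m
    using Fd assms(3) that by (subst abs_minus_commute) simp
  then show ?thesis
    using suminf_overlap[OF summable_abs_embedding_diff[OF Fs] summable_abs_embedding_diff[OF Fs]]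
      Fd assms(3-5) by simp
qed

lemma not_embeds_isometrically_l1_Mset:
  assumes inj: "inj_on \<Psi> strings" and nz: "\<forall>\<sigma>\<in>strings. \<Psi> \<sigma> \<noteq> 0"
  shows "\<not> embeds_isometrically_l1 (Mset \<Psi>)"
proof
  assume "embeds_isometrically_l1 (Mset \<Psi>)"
  then obtain F where Fs: "\<forall>m\<in>Mset \<Psi>. summable (\<lambda>n. \<bar>F m n\<bar>)"
    and Fd: "\<forall>m\<in>Mset \<Psi>. \<forall>m'\<in>Mset \<Psi>. (\<Sum>n. \<bar>F m n - F m' n\<bar>) = L1dist m m'"
    unfolding embeds_isometrically_l1_def by blast
  have zM: "(\<lambda>x. 0) \<in> Mset \<Psi>" and dM: "dfun \<in> Mset \<Psi>"
    and fM: "\<sigma> \<in> strings \<Longrightarrow> fsig \<Psi> \<sigma> \<in> Mset \<Psi>" for \<sigma>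
    by (auto simp: Mset_def)
  define v where "v m n = F m n - F (\<lambda>x. 0) n" for m n
  note summable_v = summable_abs_embedding_diff[OF Fs zM, folded v_def]
  note overlap_v = suminf_overlap_embedding[OF Fs Fd zM, folded v_def]
  have norm_v: "(\<Sum>n. \<bar>v dfun n\<bar>) = 1"
    using Fd zM dM L1dist_zero_dfun by (simp add: v_def L1dist_commute)
  have "\<bar>v dfun n\<bar> \<le> (1/2) ^ Suc k" for n k
  proof (rule abs_le_of_orthogonal_overlaps[where S = "{\<sigma>. length \<sigma> = Suc k}"
        and y = "\<lambda>\<sigma>. v (fsig \<Psi> \<sigma>)"])
    fix \<sigma> \<tau> :: "bool list"
    assume \<sigma>: "\<sigma> \<in> {\<sigma>. length \<sigma> = Suc k}" and \<tau>: "\<tau> \<in> {\<sigma>. length \<sigma> = Suc k}"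
    then have strings: "\<sigma> \<in> strings" "\<tau> \<in> strings"
      by (auto simp: strings_def)
    then show "summable (\<lambda>n. \<bar>v (fsig \<Psi> \<sigma>) n\<bar>)"
      using summable_v fM by blast
    show "(\<Sum>n. overlap (v (fsig \<Psi> \<sigma>)) (v dfun) n) = 2 * (1/2) ^ Suc k"
      using \<sigma> strings nz L1dist_dfun_fsig[of \<Psi> \<sigma>]
      by (simp add: overlap_v fM dM L1dist_commute[of "fsig \<Psi> \<sigma>" dfun]
          L1dist_zero_fsig L1dist_zero_dfun)
    assume "\<sigma> \<noteq> \<tau>"
    then have "\<Psi> \<sigma> \<noteq> \<Psi> \<tau>" "Iv \<sigma> \<inter> Iv \<tau> = {}"
      using \<sigma> \<tau> strings inj Iv_disjoint[of \<sigma> \<tau>] by (auto simp: inj_on_def)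
    then show "(\<Sum>n. overlap (v (fsig \<Psi> \<sigma>)) (v (fsig \<Psi> \<tau>)) n) = 0"
      using \<sigma> \<tau> strings nz L1dist_fsig_fsig[of \<Psi> \<sigma> \<tau>]
      by (simp add: overlap_v fM L1dist_zero_fsig)
  next
    show "{\<sigma> :: bool list. length \<sigma> = Suc k} \<noteq> {}"
      using length_replicate[of "Suc k" True] by blast
  qed (use summable_v[OF dM] norm_v in
      \<open>simp_all add: finite_lists_bool_length_eq card_lists_bool_length_eq power_one_over\<close>)
  then have "v dfun = (\<lambda>n. 0)"
    using eq_0_of_abs_le_half_powers by blast
  then show False
    using norm_v by simp
qed

theorem mainTheorem7:
  fixes \<Psi> :: "bool list \<Rightarrow> int"
  assumes "inj_on \<Psi> strings"
    and "\<forall>\<sigma>\<in>strings. \<Psi> \<sigma> \<noteq> 0"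
  shows "(\<forall>m\<in>Mset \<Psi>. integrable lborel m)
    \<and> locally_finite_L1 (Mset \<Psi>)
    \<and> \<not> embeds_isometrically_l1 (Mset \<Psi>)"
  using integrable_Mset locally_finite_Mset not_embeds_isometrically_l1_Mset[OF assms] by blast

end
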